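(* For all CQs $q,q'$ and collections of labeled examples $E=(E^+,E^-)$ (all of the same arity $k$): (1) $q'$ is a $\preceq^{\mathrm{cod}}$-generalization for $(q,E)$ if and only if $q'$ is a most-specific fitting CQ for $(E^+\cup\{e_q\},E^-)$; (2) $q$ is a most-specific fitting CQ for $E$ if and only if $q$ is a $\preceq^{\mathrm{cod}}$-generalization for $(q_\bot,E)$, where, for the relevant schema $\mathcal S=\{R_1,\dots,R_n\}$, $q_\bot$ is the $k$-ary CQ $q_\bot(x,\dots,x)\text{ :- }R_1(x,\dots,x),\dots,R_n(x,\dots,x)$.
   Context: A data example of arity $k$ is a pair $(I,\mathbf a)$ with $I$ a finite database instance and $\mathbf a$ a $k$-tuple of values of $I$. A $k$-ary CQ is $q(x_1,\dots,x_k)\text{ :- }\alpha_1,\dots,\alpha_n$ (relational atoms without constants; answer variables may repeat and each occurs in some atom). $[\![q]\!]$ denotes the set of data examples $(I,\mathbf a)$ with $\mathbf a\in q(I)$; $q_1\subseteq q_2$ is query containment, $\equiv$ equivalence. $E=(E^+,E^-)$ is a pair of sets of data examples; $q$ fits $E$ if $E^+\subseteq[\![q]\!]$ and $E^-\cap[\![q]\!]=\emptyset$. The canonical example $e_q$ of $q(x_1,\dots,x_k)$ is $(I_q,(x_1,\dots,x_k))$ where $I_q$ consists of the atoms of $q$ viewed as facts over the variables. Candidate queries are CQs over the relation symbols occurring in the input. $q_1\preceq^{\mathrm{cod}}_q q_2$ iff $[\![q]\!]\oplus[\![q_1]\!]\subseteq[\![q]\!]\oplus[\![q_2]\!]$ ($\oplus$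 = symmetric difference); $q_1\prec_q q_2$ iff $q_1\preceq_q q_2$ and not $q_2\preceq_q q_1$. A $\preceq^{\mathrm{cod}}$-generalization for $(q,E)$ is a CQ $q'$ that fits $E$ with $q\subseteq q'$ such that there is no CQ $q''$ fitting $E$ with $q\subseteq q''$ and $q''\prec^{\mathrm{cod}}_q q'$. A most-specific fitting CQ for $E$ is a CQ $q$ that fits $E$ such that $q\subseteq q'$ for every CQ $q'$ that fits $E$. *)

theory Defs
  imports Main
begin

text \<open>Values of database instances and variables of CQs are both
  natural numbers (a countably infinite domain), so that the canonical example of a
  CQ is itself a data example.\<close>

type_synonym 'r fact = "'r \<times> nat list"
type_synonym 'r inst = "'r fact set"
type_synonym 'r example = "'r inst \<times> nat list"
type_synonym 'r cq = "nat list \<times> 'r fact set"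

definition wf_inst :: "('r \<Rightarrow> nat) \<Rightarrow> 'r inst \<Rightarrow> bool" where
  "wf_inst ar I \<longleftrightarrow> finite I \<and> (\<forall>(R, vs) \<in> I. length vs = ar R)"

definition adom :: "'r inst \<Rightarrow> nat set" where
  "adom I = (\<Union>(R, vs) \<in> I. set vs)"

definition over_schema :: "'r set \<Rightarrow> 'r inst \<Rightarrow> bool" where
  "over_schema S I \<longleftrightarrow> (\<forall>(R, vs) \<in> I. R \<in> S)"

definition data_example :: "('r \<Rightarrow> nat) \<Rightarrow> nat \<Rightarrow> 'r example \<Rightarrow> bool" where
  "data_example ar k e \<longleftrightarrow> wf_inst ar (fst e) \<and> length (snd e) = k \<and> set (snd e) \<subseteq> adom (fst e)"

definition is_cq :: "('r \<Rightarrow> nat) \<Rightarrow> 'r set \<Rightarrow> nat \<Rightarrow> 'r cq \<Rightarrow> bool" where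
  "is_cq ar S k q \<longleftrightarrow> length (fst q) = k \<and> wf_inst ar (snd q) \<and> over_schema S (snd q)
     \<and> set (fst q) \<subseteq> adom (snd q)"

definition answers :: "'r cq \<Rightarrow> 'r inst \<Rightarrow> nat list set" where
  "answers q I = {map h (fst q) | h. \<forall>(R, vs) \<in> snd q. (R, map h vs) \<in> I}"

definition den :: "('r \<Rightarrow> nat) \<Rightarrow> 'r cq \<Rightarrow> 'r example set" where
  "den ar q = {e. data_example ar (length (fst q)) e \<and> snd e \<in> answers q (fst e)}"

definition contained :: "('r \<Rightarrow> nat) \<Rightarrow> 'r cq \<Rightarrow> 'r cq \<Rightarrow> bool" where
  "contained ar q1 q2 \<longleftrightarrow> den ar q1 \<subseteq> den ar q2"

definition canonical_example :: "'r cq \<Rightarrow> 'r example" where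
  "canonical_example q = (snd q, fst q)"

definition fits :: "('r \<Rightarrow> nat) \<Rightarrow> 'r example set \<times> 'r example set \<Rightarrow> 'r cq \<Rightarrow> bool" where
  "fits ar E q \<longleftrightarrow> fst E \<subseteq> den ar q \<and> snd E \<inter> den ar q = {}"

definition symdiff :: "'a set \<Rightarrow> 'a set \<Rightarrow> 'a set" where
  "symdiff A B = (A - B) \<union> (B - A)"

definition cod_le :: "('r \<Rightarrow> nat) \<Rightarrow> 'r cq \<Rightarrow> 'r cq \<Rightarrow> 'r cq \<Rightarrow> bool" where
  "cod_le ar q q1 q2 \<longleftrightarrow> symdiff (den ar q) (den ar q1) \<subseteq> symdiff (den ar q) (den ar q2)"

definition cod_less :: "('r \<Rightarrow> nat) \<Rightarrow> 'r cq \<Rightarrow> 'r cq \<Rightarrow> 'r cq \<Rightarrow> bool" where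
  "cod_less ar q q1 q2 \<longleftrightarrow> cod_le ar q q1 q2 \<and> \<not> cod_le ar q q2 q1"

definition cod_generalization ::
  "('r \<Rightarrow> nat) \<Rightarrow> 'r set \<Rightarrow> nat \<Rightarrow> 'r cq \<Rightarrow> 'r example set \<times> 'r example set \<Rightarrow> 'r cq \<Rightarrow> bool" where
  "cod_generalization ar S k q E q' \<longleftrightarrow>
     is_cq ar S k q' \<and> fits ar E q' \<and> contained ar q q' \<and>
     \<not> (\<exists>q''. is_cq ar S k q'' \<and> fits ar E q'' \<and> contained ar q q'' \<and> cod_less ar q q'' q')"

definition most_specific_fitting ::
  "('r \<Rightarrow> nat) \<Rightarrow> 'r set \<Rightarrow> nat \<Rightarrow> 'r example set \<times> 'r example set \<Rightarrow> 'r cq \<Rightarrow> bool" where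
  "most_specific_fitting ar S k E q \<longleftrightarrow>
     is_cq ar S k q \<and> fits ar E q \<and> (\<forall>q'. is_cq ar S k q' \<and> fits ar E q' \<longrightarrow> contained ar q q')"

definition q_bot :: "('r \<Rightarrow> nat) \<Rightarrow> 'r set \<Rightarrow> nat \<Rightarrow> 'r cq" where
  "q_bot ar S k = (replicate k 0, (\<lambda>R. (R, replicate (ar R) 0)) ` S)"

end

theory Submission
  imports Defs
begin

text \<open>Among CQs containing \<open>q\<close>, the symmetric difference with \<open>[[q]]\<close> is \<open>[[q']] - [[q]]\<close>,
  so \<open>\<preceq>\<^sup>c\<^sup>o\<^sup>d\<^sub>q\<close> is just containment there. CQs of equal arity are closed under conjunction
  (identify the answer variables position by position), and \<open>[[q\<^sub>1 \<and> q\<^sub>2]] = [[q\<^sub>1]] \<inter> [[q\<^sub>2]]\<close>;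
  hence a fitting CQ above \<open>q\<close> that is minimal for \<open>\<preceq>\<^sup>c\<^sup>o\<^sup>d\<^sub>q\<close> is below every fitting CQ
  above \<open>q\<close>. By Chandra and Merlin, \<open>q \<subseteq> p\<close> iff the canonical example \<open>e\<^sub>q\<close> is a positive
  example for \<open>p\<close>, which gives (1). For (2), \<open>q\<^sub>\<bottom>\<close> is contained in every \<open>k\<close>-ary CQ over
  the schema, so "above \<open>q\<^sub>\<bottom>\<close>" is no constraint at all.\<close>

definition rename_atoms :: "(nat \<Rightarrow> nat) \<Rightarrow> 'r inst \<Rightarrow> 'r inst" where
  "rename_atoms h I = (\<lambda>(R, vs). (R, map h vs)) ` I"

lemma rename_atoms_id [simp]: "rename_atoms id I = I"
  by (simp add: rename_atoms_def case_prod_beta)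

lemma rename_atoms_comp: "rename_atoms (h \<circ> g) I = rename_atoms h (rename_atoms g I)"
  by (force simp: rename_atoms_def)

lemma rename_atoms_mono: "I \<subseteq> J \<Longrightarrow> rename_atoms h I \<subseteq> rename_atoms h J"
  by (auto simp: rename_atoms_def)

lemma rename_atoms_Un: "rename_atoms h (I \<union> J) = rename_atoms h I \<union> rename_atoms h J"
  by (simp add: rename_atoms_def image_Un)

lemma adom_rename_atoms: "adom (rename_atoms h I) = h ` adom I"
  by (force simp: adom_def rename_atoms_def)

lemma wf_inst_rename_atoms: "wf_inst ar I \<Longrightarrow> wf_inst ar (rename_atoms h I)"
  by (auto simp: wf_inst_def rename_atoms_def)

lemma over_schema_rename_atoms: "over_schema S I \<Longrightarrow> over_schema S (rename_atoms h I)"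
  by (auto simp: over_schema_def rename_atoms_def)

lemma wf_inst_Un: "wf_inst ar (I \<union> J) \<longleftrightarrow> wf_inst ar I \<and> wf_inst ar J"
  by (auto simp: wf_inst_def)

lemma over_schema_Un: "over_schema S (I \<union> J) \<longleftrightarrow> over_schema S I \<and> over_schema S J"
  by (auto simp: over_schema_def)

lemma adom_Un: "adom (I \<union> J) = adom I \<union> adom J"
  by (auto simp: adom_def)

lemma mem_den_iff:
  "e \<in> den ar q \<longleftrightarrow> data_example ar (length (fst q)) e
     \<and> (\<exists>h. snd e = map h (fst q) \<and> rename_atoms h (snd q) \<subseteq> fst e)"
  by (auto simp: den_def answers_def rename_atoms_def)

lemma canonical_example_in_den:
  assumes "is_cq ar S k q"
  shows "canonical_example q \<in> den ar q"
  using assms by (auto simp: mem_den_iff canonical_example_def data_example_def is_cq_def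
      intro!: exI[of _ id])

lemma contained_iff_canonical_example_in_den:
  assumes q: "is_cq ar S k q" and p: "is_cq ar S k p"
  shows "contained ar q p \<longleftrightarrow> canonical_example q \<in> den ar p"
proof
  assume "contained ar q p"
  then show "canonical_example q \<in> den ar p"
    using canonical_example_in_den[OF q] by (auto simp: contained_def)
next
  assume "canonical_example q \<in> den ar p"
  then obtain g where g: "fst q = map g (fst p)" "rename_atoms g (snd p) \<subseteq> snd q"
    by (auto simp: mem_den_iff canonical_example_def)
  have "e \<in> den ar p" if "e \<in> den ar q" for e
  proof -
    from that obtain h where ex: "data_example ar (length (fst q)) e"
      and h: "snd e = map h (fst q)" "rename_atoms h (snd q) \<subseteq> fst e"
      by (auto simp: mem_den_iff)
    have "snd e = map (h \<circ> g) (fst p)"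
      using h(1) g(1) by simp
    moreover have "rename_atoms (h \<circ> g) (snd p) \<subseteq> fst e"
      using rename_atoms_mono[OF g(2), of h] h(2) by (simp add: rename_atoms_comp)
    moreover have "length (fst p) = length (fst q)"
      using q p by (simp add: is_cq_def)
    ultimately show ?thesis
      using ex unfolding mem_den_iff by (intro conjI exI[of _ "h \<circ> g"]) simp_all
  qed
  then show "contained ar q p"
    by (auto simp: contained_def)
qed

lemma equivclp_Least: "equivclp r v (LEAST w :: 'a :: wellorder. equivclp r v w)"
  by (rule LeastI[of _ v]) simp

lemma Least_equivclp_cong:
  assumes "equivclp r v w"
  shows "(LEAST u :: 'a :: wellorder. equivclp r v u) = (LEAST u. equivclp r w u)"
proof -
  have "equivclp r v u \<longleftrightarrow> equivclp r w u" for u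
    using assms by (meson equivclp_sym equivclp_trans)
  then show ?thesis
    by simp
qed

lemma equivclp_respects:
  assumes "\<And>a b. r a b \<Longrightarrow> f a = f b" and "equivclp r v w"
  shows "f v = f w"
  using assms(2) by (induction rule: equivclp_induct) (auto dest: assms(1))

text \<open>The variables of \<open>q\<^sub>1\<close> and \<open>q\<^sub>2\<close> are made disjoint as \<open>2 v\<close> and \<open>2 v + 1\<close>;
  the \<open>i\<close>-th answer variables of both are linked, and each tagged variable is sent to the
  least member of its class under the equivalence generated by these links.\<close>

definition answer_link :: "'r cq \<Rightarrow> 'r cq \<Rightarrow> nat \<Rightarrow> nat \<Rightarrow> bool" where
  "answer_link q\<^sub>1 q\<^sub>2 u w \<longleftrightarrow>
     (\<exists>i < length (fst q\<^sub>1). u = 2 * (fst q\<^sub>1 ! i) \<and> w = 2 * (fst q\<^sub>2 ! i) + 1)"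

definition conj_var :: "'r cq \<Rightarrow> 'r cq \<Rightarrow> nat \<Rightarrow> nat" where
  "conj_var q\<^sub>1 q\<^sub>2 v = (LEAST w. equivclp (answer_link q\<^sub>1 q\<^sub>2) v w)"

definition cq_conj :: "'r cq \<Rightarrow> 'r cq \<Rightarrow> 'r cq" where
  "cq_conj q\<^sub>1 q\<^sub>2 =
     (map (\<lambda>v. conj_var q\<^sub>1 q\<^sub>2 (2 * v)) (fst q\<^sub>1),
      rename_atoms (\<lambda>v. conj_var q\<^sub>1 q\<^sub>2 (2 * v)) (snd q\<^sub>1)
        \<union> rename_atoms (\<lambda>v. conj_var q\<^sub>1 q\<^sub>2 (2 * v + 1)) (snd q\<^sub>2))"

lemma conj_var_respects:
  assumes "\<And>a b. answer_link q\<^sub>1 q\<^sub>2 a b \<Longrightarrow> f a = f b"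
  shows "f (conj_var q\<^sub>1 q\<^sub>2 v) = f v"
  unfolding conj_var_def by (rule sym, rule equivclp_respects[OF assms equivclp_Least])

lemma map_conj_var_answers:
  assumes "length (fst q\<^sub>1) = length (fst q\<^sub>2)"
  shows "map (\<lambda>v. conj_var q\<^sub>1 q\<^sub>2 (2 * v + 1)) (fst q\<^sub>2) = map (\<lambda>v. conj_var q\<^sub>1 q\<^sub>2 (2 * v)) (fst q\<^sub>1)"
proof (rule nth_equalityI)
  fix i assume "i < length (map (\<lambda>v. conj_var q\<^sub>1 q\<^sub>2 (2 * v + 1)) (fst q\<^sub>2))"
  then have "i < length (fst q\<^sub>1)" "i < length (fst q\<^sub>2)"
    using assms by auto
  moreover have "answer_link q\<^sub>1 q\<^sub>2 (2 * (fst q\<^sub>1 ! i)) (2 * (fst q\<^sub>2 ! i) + 1)"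
    using \<open>i < length (fst q\<^sub>1)\<close> by (auto simp: answer_link_def)
  then have "conj_var q\<^sub>1 q\<^sub>2 (2 * (fst q\<^sub>1 ! i)) = conj_var q\<^sub>1 q\<^sub>2 (2 * (fst q\<^sub>2 ! i) + 1)"
    unfolding conj_var_def by (intro Least_equivclp_cong r_into_equivclp)
  ultimately show "map (\<lambda>v. conj_var q\<^sub>1 q\<^sub>2 (2 * v + 1)) (fst q\<^sub>2) ! i
      = map (\<lambda>v. conj_var q\<^sub>1 q\<^sub>2 (2 * v)) (fst q\<^sub>1) ! i"
    by simp
qed (use assms in simp)

lemma den_cq_conj_subset:
  assumes len: "length (fst q\<^sub>1) = length (fst q\<^sub>2)"
  shows "den ar (cq_conj q\<^sub>1 q\<^sub>2) \<subseteq> den ar q\<^sub>1 \<inter> den ar q\<^sub>2"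
proof
  let ?l = "\<lambda>v. conj_var q\<^sub>1 q\<^sub>2 (2 * v)" and ?r = "\<lambda>v. conj_var q\<^sub>1 q\<^sub>2 (2 * v + 1)"
  fix e assume "e \<in> den ar (cq_conj q\<^sub>1 q\<^sub>2)"
  then obtain h where ex: "data_example ar (length (fst q\<^sub>1)) e"
    and h: "snd e = map h (map ?l (fst q\<^sub>1))"
      "rename_atoms h (rename_atoms ?l (snd q\<^sub>1) \<union> rename_atoms ?r (snd q\<^sub>2)) \<subseteq> fst e"
    by (auto simp: mem_den_iff cq_conj_def)
  have "snd e = map (h \<circ> ?l) (fst q\<^sub>1)" "rename_atoms (h \<circ> ?l) (snd q\<^sub>1) \<subseteq> fst e"
    using h by (simp_all add: rename_atoms_comp rename_atoms_Un)
  with ex have "e \<in> den ar q\<^sub>1"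
    unfolding mem_den_iff by blast
  moreover have "snd e = map (h \<circ> ?r) (fst q\<^sub>2)" "rename_atoms (h \<circ> ?r) (snd q\<^sub>2) \<subseteq> fst e"
    using h map_conj_var_answers[OF len]
    by (simp_all add: rename_atoms_comp rename_atoms_Un flip: map_map)
  with ex len have "e \<in> den ar q\<^sub>2"
    unfolding mem_den_iff by metis
  ultimately show "e \<in> den ar q\<^sub>1 \<inter> den ar q\<^sub>2"
    by blast
qed

lemma den_Int_subset_den_cq_conj:
  assumes len: "length (fst q\<^sub>1) = length (fst q\<^sub>2)"
  shows "den ar q\<^sub>1 \<inter> den ar q\<^sub>2 \<subseteq> den ar (cq_conj q\<^sub>1 q\<^sub>2)"
proof
  let ?l = "\<lambda>v. conj_var q\<^sub>1 q\<^sub>2 (2 * v)" and ?r = "\<lambda>v. conj_var q\<^sub>1 q\<^sub>2 (2 * v + 1)"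
  fix e assume "e \<in> den ar q\<^sub>1 \<inter> den ar q\<^sub>2"
  then obtain h\<^sub>1 h\<^sub>2 where ex: "data_example ar (length (fst q\<^sub>1)) e"
    and h\<^sub>1: "snd e = map h\<^sub>1 (fst q\<^sub>1)" "rename_atoms h\<^sub>1 (snd q\<^sub>1) \<subseteq> fst e"
    and h\<^sub>2: "snd e = map h\<^sub>2 (fst q\<^sub>2)" "rename_atoms h\<^sub>2 (snd q\<^sub>2) \<subseteq> fst e"
    by (auto simp: mem_den_iff)
  define f where "f v = (if even v then h\<^sub>1 (v div 2) else h\<^sub>2 (v div 2))" for v
  have "f a = f b" if "answer_link q\<^sub>1 q\<^sub>2 a b" for a b
  proof -
    from that obtain i where "i < length (fst q\<^sub>1)"
      and "a = 2 * (fst q\<^sub>1 ! i)" "b = 2 * (fst q\<^sub>2 ! i) + 1"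
      by (auto simp: answer_link_def)
    moreover from this(1) have "h\<^sub>1 (fst q\<^sub>1 ! i) = h\<^sub>2 (fst q\<^sub>2 ! i)"
      using h\<^sub>1(1) h\<^sub>2(1) len by (metis nth_map)
    ultimately show ?thesis
      by (simp add: f_def)
  qed
  then have f_conj_var: "f (conj_var q\<^sub>1 q\<^sub>2 v) = f v" for v
    by (rule conj_var_respects)
  have "f (2 * v) = h\<^sub>1 v" "f (2 * v + 1) = h\<^sub>2 v" for v
    by (simp_all add: f_def)
  then have "f \<circ> ?l = h\<^sub>1" "f \<circ> ?r = h\<^sub>2"
    by (simp_all add: fun_eq_iff f_conj_var)
  then have "snd e = map f (map ?l (fst q\<^sub>1))"
    "rename_atoms f (rename_atoms ?l (snd q\<^sub>1) \<union> rename_atoms ?r (snd q\<^sub>2)) \<subseteq> fst e"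
    using h\<^sub>1 h\<^sub>2 by (simp_all add: rename_atoms_Un rename_atoms_comp[symmetric])
  then show "e \<in> den ar (cq_conj q\<^sub>1 q\<^sub>2)"
    using ex unfolding mem_den_iff cq_conj_def by auto
qed

lemma den_cq_conj:
  "length (fst q\<^sub>1) = length (fst q\<^sub>2) \<Longrightarrow> den ar (cq_conj q\<^sub>1 q\<^sub>2) = den ar q\<^sub>1 \<inter> den ar q\<^sub>2"
  by (intro equalityI den_cq_conj_subset den_Int_subset_den_cq_conj)

lemma is_cq_cq_conj:
  assumes "is_cq ar S k q\<^sub>1" and "is_cq ar S k q\<^sub>2"
  shows "is_cq ar S k (cq_conj q\<^sub>1 q\<^sub>2)"
proof -
  let ?l = "\<lambda>v. conj_var q\<^sub>1 q\<^sub>2 (2 * v)"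
  have "set (map ?l (fst q\<^sub>1)) \<subseteq> adom (rename_atoms ?l (snd q\<^sub>1))"
    using assms(1) by (auto simp: is_cq_def adom_rename_atoms)
  then show ?thesis
    using assms unfolding is_cq_def cq_conj_def fst_conv snd_conv wf_inst_Un over_schema_Un adom_Un
    by (simp add: wf_inst_rename_atoms over_schema_rename_atoms le_supI1)
qed

lemma cod_le_iff_den_subset:
  assumes "contained ar b q\<^sub>1" and "contained ar b q\<^sub>2"
  shows "cod_le ar b q\<^sub>1 q\<^sub>2 \<longleftrightarrow> den ar q\<^sub>1 \<subseteq> den ar q\<^sub>2"
  using assms unfolding cod_le_def symdiff_def contained_def by blast

lemma cod_generalization_contained:
  assumes gen: "cod_generalization ar S k b E q'"
    and p: "is_cq ar S k p" "fits ar E p" "contained ar b p"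
  shows "contained ar q' p"
proof -
  from gen have q': "is_cq ar S k q'" "fits ar E q'" "contained ar b q'"
    by (simp_all add: cod_generalization_def)
  let ?c = "cq_conj q' p"
  have den_c: "den ar ?c = den ar q' \<inter> den ar p"
    using q'(1) p(1) by (intro den_cq_conj) (simp add: is_cq_def)
  have "is_cq ar S k ?c"
    using q'(1) p(1) by (rule is_cq_cq_conj)
  moreover have "fits ar E ?c"
    using q'(2) p(2) den_c by (auto simp: fits_def)
  moreover have b_c: "contained ar b ?c"
    using q'(3) p(3) den_c by (simp add: contained_def)
  ultimately have "\<not> cod_less ar b ?c q'"
    using gen unfolding cod_generalization_def by blast
  moreover have "cod_le ar b ?c q'"
    using cod_le_iff_den_subset[OF b_c q'(3)] den_c by simp
  ultimately have "cod_le ar b q' ?c"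
    by (simp add: cod_less_def)
  then show ?thesis
    using cod_le_iff_den_subset[OF q'(3) b_c] den_c by (simp add: contained_def)
qed

lemma cod_generalization_iff_least:
  "cod_generalization ar S k b E q' \<longleftrightarrow>
     is_cq ar S k q' \<and> fits ar E q' \<and> contained ar b q' \<and>
     (\<forall>p. is_cq ar S k p \<and> fits ar E p \<and> contained ar b p \<longrightarrow> contained ar q' p)"
proof
  assume "cod_generalization ar S k b E q'"
  with cod_generalization_contained
  show "is_cq ar S k q' \<and> fits ar E q' \<and> contained ar b q' \<and>
      (\<forall>p. is_cq ar S k p \<and> fits ar E p \<and> contained ar b p \<longrightarrow> contained ar q' p)"
    unfolding cod_generalization_def by blast
next
  assume least: "is_cq ar S k q' \<and> fits ar E q' \<and> contained ar b q' \<and>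
      (\<forall>p. is_cq ar S k p \<and> fits ar E p \<and> contained ar b p \<longrightarrow> contained ar q' p)"
  have "\<not> cod_less ar b p q'" if "contained ar b p" "contained ar q' p" for p
    using that least cod_le_iff_den_subset[of ar b q' p]
    by (simp add: cod_less_def contained_def)
  with least show "cod_generalization ar S k b E q'"
    unfolding cod_generalization_def by blast
qed

lemma fits_add_canonical_example_iff:
  assumes "is_cq ar S k q" and "is_cq ar S k p"
  shows "fits ar (Epos \<union> {canonical_example q}, Eneg) p \<longleftrightarrow>
           fits ar (Epos, Eneg) p \<and> contained ar q p"
  using contained_iff_canonical_example_in_den[OF assms] by (auto simp: fits_def)

text \<open>For \<open>k > 0\<close> the answer variable \<open>0\<close> of \<open>q\<^sub>\<bottom>\<close> occurs in an atom only if some relation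
  of \<open>S\<close> has positive arity; the \<open>k\<close>-ary CQ \<open>p\<close> witnesses this.\<close>

lemma is_cq_q_bot:
  assumes "finite S" and p: "is_cq ar S k p"
  shows "is_cq ar S k (q_bot ar S k)"
proof -
  have "0 \<in> adom (snd (q_bot ar S k))" if "k > 0"
  proof -
    from that p obtain x where "x \<in> set (fst p)"
      by (metis is_cq_def length_greater_0_conv nth_mem)
    with p obtain R vs where atom: "(R, vs) \<in> snd p" and "x \<in> set vs"
      by (auto simp: is_cq_def adom_def)
    from atom p have "R \<in> S" "length vs = ar R"
      by (auto simp: is_cq_def over_schema_def wf_inst_def)
    moreover have "length vs > 0"
      using \<open>x \<in> set vs\<close> by (rule length_pos_if_in_set)
    ultimately have "R \<in> S" "ar R > 0"
      by simp_all
    then show ?thesis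
      by (force simp: q_bot_def adom_def)
  qed
  then have "set (replicate k 0) \<subseteq> adom (snd (q_bot ar S k))"
    by (cases "k = 0") simp_all
  with \<open>finite S\<close> show ?thesis
    by (simp add: is_cq_def q_bot_def wf_inst_def over_schema_def)
qed

lemma q_bot_contained:
  assumes "finite S" and p: "is_cq ar S k p"
  shows "contained ar (q_bot ar S k) p"
proof -
  have q_bot: "is_cq ar S k (q_bot ar S k)"
    using assms by (rule is_cq_q_bot)
  have "rename_atoms (\<lambda>_. 0) (snd p) \<subseteq> snd (q_bot ar S k)"
    using p by (force simp: rename_atoms_def q_bot_def is_cq_def wf_inst_def over_schema_def
        map_replicate_const)
  moreover have "replicate k 0 = map (\<lambda>_. 0) (fst p)"
    using p by (simp add: is_cq_def map_replicate_const)
  ultimately have "canonical_example (q_bot ar S k) \<in> den ar p"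
    using q_bot p unfolding mem_den_iff canonical_example_def
    by (auto simp: data_example_def is_cq_def q_bot_def)
  then show ?thesis
    using contained_iff_canonical_example_in_den[OF q_bot p] by simp
qed

theorem theorem8:
  fixes ar :: "'r \<Rightarrow> nat" and S :: "'r set" and k :: nat
    and q q' :: "'r cq" and Epos Eneg :: "'r example set"
  assumes "finite S"
    and "is_cq ar S k q" and "is_cq ar S k q'"
    and "\<forall>e \<in> Epos \<union> Eneg. data_example ar k e \<and> over_schema S (fst e)"
  shows "(cod_generalization ar S k q (Epos, Eneg) q' \<longleftrightarrow>
            most_specific_fitting ar S k (Epos \<union> {canonical_example q}, Eneg) q')
       \<and> (most_specific_fitting ar S k (Epos, Eneg) q \<longleftrightarrow>
            cod_generalization ar S k (q_bot ar S k) (Epos, Eneg) q)"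
proof
  show "cod_generalization ar S k q (Epos, Eneg) q' \<longleftrightarrow>
      most_specific_fitting ar S k (Epos \<union> {canonical_example q}, Eneg) q'"
    unfolding cod_generalization_iff_least most_specific_fitting_def
    using fits_add_canonical_example_iff[OF assms(2)] by blast
  have "contained ar (q_bot ar S k) p" if "is_cq ar S k p" for p
    using assms(1) that by (rule q_bot_contained)
  then show "most_specific_fitting ar S k (Epos, Eneg) q \<longleftrightarrow>
      cod_generalization ar S k (q_bot ar S k) (Epos, Eneg) q"
    unfolding cod_generalization_iff_least most_specific_fitting_def
    using assms(2) by blast
qed

end
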